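(* Let $n\ge 2$ and let $G$ be a labeled threshold graph on the vertex set $\{1,\dots,n\}$. Then there exists a unique threshold pair $(\pi,w)$ of size $n$ in standard form such that $G=T(\pi,w)$ (equality as labeled graphs).
   Context: A threshold graph is a graph obtainable from the empty graph by repeatedly adding a new vertex that is either adjacent to all existing vertices or to none. A labeled threshold graph on $n$ vertices is a threshold graph with vertex set $\{1,\dots,n\}$; two labeled graphs are equal if they have the same edge set. Let $\mathcal{S}_n$ be the set of permutations of $\{1,\dots,n\}$, written in one-line notation $\pi=\pi_1\pi_2\cdots\pi_n$. A threshold pair of size $n$ is a pair $(\pi,w)$ with $\pi\in\mathcal{S}_n$ and $w=w_1\cdots w_n\in\{+1,-1\}^n$. The graph $T(\pi,w)$ is defined as follows: $G_1$ is the graph with the single vertex $\pi_1$; for $2\le i\le n$, $G_i$ is obtained from $G_{i-1}$ by adding a new vertex $\pi_i$ which is adjacent to every vertex of $G_{i-1}$ if $w_i=+1$ and is isolated if $w_i=-1$; then $T(\pi,w)=G_n$. A threshold pair $(\pi,w)$ of size $n\ge 2$ is in standard form if $w_1=w_2$ and, for all $1\le i<n$, $w_i=w_{i+1}$ implies $\pi_i<\pi_{i+1}$. *)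

theory Defs
  imports Main
begin

text \<open>Simple graphs are represented as pairs (V, E) of a vertex set and a set of
  edges, each edge being a two-element subset of V.\<close>

type_synonym graph = "nat set \<times> nat set set"

inductive threshold_graph :: "graph \<Rightarrow> bool" where
  empty: "threshold_graph ({}, {})"
| isolated: "threshold_graph (V, E) \<Longrightarrow> v \<notin> V \<Longrightarrow> threshold_graph (insert v V, E)"
| dominating: "threshold_graph (V, E) \<Longrightarrow> v \<notin> V \<Longrightarrow>
      threshold_graph (insert v V, E \<union> {{v, u} | u. u \<in> V})"

text \<open>A permutation of {1..n} in one-line notation is a list pi with
  pi ! (i-1) = pi_i; a sign word w is a list of booleans, True meaning +1 and
  False meaning -1. Indices are 0-based in the lists.\<close>

definition is_perm :: "nat \<Rightarrow> nat list \<Rightarrow> bool" where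
  "is_perm n pi \<longleftrightarrow> length pi = n \<and> distinct pi \<and> set pi = {1..n}"

definition threshold_pair :: "nat \<Rightarrow> nat list \<Rightarrow> bool list \<Rightarrow> bool" where
  "threshold_pair n pi w \<longleftrightarrow> is_perm n pi \<and> length w = n"

text \<open>The graph G_k built from the first k letters (G_1 = single vertex pi_1).
  Vertex pi_i (i \<ge> 2) is joined to all previous vertices iff w_i = +1; w_1 is
  irrelevant.\<close>

fun build :: "nat list \<Rightarrow> bool list \<Rightarrow> nat \<Rightarrow> graph" where
  "build pi w 0 = ({}, {})"
| "build pi w (Suc k) =
     (if k = 0 then ({pi ! 0}, {})
      else (let (V, E) = build pi w k in
            (insert (pi ! k) V,
             if w ! k then E \<union> {{pi ! k, u} | u. u \<in> V} else E)))"

definition T :: "nat list \<Rightarrow> bool list \<Rightarrow> graph" where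
  "T pi w = build pi w (length pi)"

definition standard_form :: "nat \<Rightarrow> nat list \<Rightarrow> bool list \<Rightarrow> bool" where
  "standard_form n pi w \<longleftrightarrow> w ! 0 = w ! 1 \<and>
     (\<forall>i. i + 1 < n \<longrightarrow> w ! i = w ! (i + 1) \<longrightarrow> pi ! i < pi ! (i + 1))"

end

theory Submission
  imports Defs "HOL-Combinatorics.Transposition"
begin

(* Every threshold graph is T(pi, w) for some pair, read off from its construction. Replacing
   w_1 by w_2, or swapping adjacent letters pi_i, pi_(i+1) with w_i = w_(i+1), does not change
   T(pi, w), and swapping such a descent pi_i > pi_(i+1) increases the weight sum_i i * pi_i.
   Hence a pair of maximal weight among those with w_1 = w_2 is in standard form.

   For uniqueness: in T(pi, w) the last vertex pi_n is adjacent to all others if w_n = +1 and to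
   none if w_n = -1. In standard form, every other vertex pi_j of the same kind has
   w_j = ... = w_n (via w_1 = w_2 when j = 1), so pi_j < pi_n. Thus two standard-form pairs of
   the same graph agree in their last sign and last letter, and deleting pi_n gives standard-form
   pairs of a smaller graph, to which induction applies. *)

definition build_edges :: "nat list \<Rightarrow> bool list \<Rightarrow> nat \<Rightarrow> nat set set" where
  "build_edges pi w k = {{pi ! i, pi ! j} | i j. j < i \<and> i < k \<and> w ! i}"

lemma build_edges_Suc:
  "build_edges pi w (Suc k) = build_edges pi w k \<union> {{pi ! k, pi ! j} | j. j < k \<and> w ! k}"
  unfolding build_edges_def by (auto simp: less_Suc_eq)

lemma build_edges_cong:
  assumes "\<And>i. i < k \<Longrightarrow> pi' ! i = pi ! i" "\<And>i. 0 < i \<Longrightarrow> i < k \<Longrightarrow> w' ! i = w ! i"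
  shows "build_edges pi' w' k = build_edges pi w k"
proof -
  have "{pi' ! i, pi' ! j} = {pi ! i, pi ! j} \<and> w' ! i = w ! i" if "j < i" "i < k" for i j
    using that assms by simp
  then show ?thesis
    unfolding build_edges_def by (smt (verit) Collect_cong)
qed

lemma build_edges_take: "build_edges (take k pi) (take k w) k = build_edges pi w k"
  by (rule build_edges_cong) simp_all

lemma build_eq: "k \<le> length pi \<Longrightarrow> build pi w k = (set (take k pi), build_edges pi w k)"
proof (induction k)
  case 0
  show ?case by (simp add: build_edges_def)
next
  case (Suc k)
  show ?case
  proof (cases "k = 0")
    case True
    then show ?thesis using Suc.prems by (cases pi) (auto simp: build_edges_def)
  next
    case False
    have IH: "build pi w k = (set (take k pi), build_edges pi w k)"
      using Suc by simp
    have "set (take k pi) = (\<lambda>j. pi ! j) ` {..<k}"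
      using Suc.prems nth_image[of k pi] by (simp add: atLeast0LessThan)
    then have "{{pi ! k, pi ! j} | j. j < k \<and> w ! k} =
        (if w ! k then {{pi ! k, u} | u. u \<in> set (take k pi)} else {})"
      by auto
    moreover have "set (take (Suc k) pi) = insert (pi ! k) (set (take k pi))"
      using Suc.prems by (simp add: take_Suc_conv_app_nth)
    ultimately show ?thesis
      using False IH by (simp add: build_edges_Suc)
  qed
qed

lemma T_eq: "T pi w = (set pi, build_edges pi w (length pi))"
  unfolding T_def by (simp add: build_eq)

lemma doubleton_in_build_edges_iff:
  assumes "distinct pi" "i < length pi" "j < length pi" "i \<noteq> j"
  shows "{pi ! i, pi ! j} \<in> build_edges pi w (length pi) \<longleftrightarrow> w ! max i j"
proof
  assume "{pi ! i, pi ! j} \<in> build_edges pi w (length pi)"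
  then obtain a b where ab: "b < a" "a < length pi" "w ! a" "{pi ! i, pi ! j} = {pi ! a, pi ! b}"
    unfolding build_edges_def by blast
  then have "(i = a \<and> j = b) \<or> (i = b \<and> j = a)"
    using assms by (auto simp: doubleton_eq_iff nth_eq_iff_index_eq)
  then show "w ! max i j" using ab by auto
next
  assume "w ! max i j"
  moreover have "min i j < max i j" "max i j < length pi"
    using assms by auto
  ultimately have "{pi ! max i j, pi ! min i j} \<in> build_edges pi w (length pi)"
    unfolding build_edges_def by blast
  then show "{pi ! i, pi ! j} \<in> build_edges pi w (length pi)"
    by (cases "i \<le> j") (auto simp: max_def min_def insert_commute)
qed

lemma T_snoc:
  assumes "length w = length pi" "T pi w = (V, E)"
  shows "T (pi @ [v]) (w @ [b]) = (insert v V, if b then E \<union> {{v, u} | u. u \<in> V} else E)"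
proof -
  have V: "V = set pi" and E: "E = build_edges pi w (length pi)"
    using assms(2) by (simp_all add: T_eq)
  have "build_edges (pi @ [v]) (w @ [b]) (length pi) = E"
    using build_edges_take[of "length pi" "pi @ [v]" "w @ [b]"] assms(1) E by simp
  moreover have "{{v, (pi @ [v]) ! j} | j. j < length pi \<and> b} = (if b then {{v, u} | u. u \<in> V} else {})"
    using V by (auto simp: nth_append in_set_conv_nth)
  moreover have "(w @ [b]) ! length pi = b"
    using assms(1) by (metis nth_append_length)
  ultimately show ?thesis
    using V by (simp add: T_eq build_edges_Suc)
qed

lemma threshold_graph_imp_T:
  "threshold_graph G \<Longrightarrow>
    \<exists>pi w. distinct pi \<and> set pi = fst G \<and> length w = length pi \<and> T pi w = G"
proof (induction G rule: threshold_graph.induct)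
  case empty
  show ?case by (intro exI[of _ "[]"]) (simp add: T_def)
next
  case (isolated V E v)
  then obtain pi w where "distinct pi" "set pi = V" "length w = length pi" "T pi w = (V, E)"
    by auto
  then show ?case
    using isolated.hyps T_snoc[of w pi V E v False]
    by (intro exI[of _ "pi @ [v]"] exI[of _ "w @ [False]"]) simp
next
  case (dominating V E v)
  then obtain pi w where "distinct pi" "set pi = V" "length w = length pi" "T pi w = (V, E)"
    by auto
  then show ?case
    using dominating.hyps T_snoc[of w pi V E v True]
    by (intro exI[of _ "pi @ [v]"] exI[of _ "w @ [True]"]) simp
qed

lemma T_update_first_sign: "T pi (w[0 := b]) = T pi w"
proof -
  have "build_edges pi (w[0 := b]) (length pi) = build_edges pi w (length pi)"
    by (rule build_edges_cong) simp_all
  then show ?thesis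
    by (simp add: T_eq)
qed

lemma build_edges_swap_subset:
  assumes "distinct pi" "Suc i < length pi" "w ! i = w ! Suc i"
  shows "build_edges (pi[i := pi ! Suc i, Suc i := pi ! i]) w (length pi) \<subseteq>
    build_edges pi w (length pi)"
proof
  let ?\<tau> = "transpose i (Suc i)"
  fix e
  assume "e \<in> build_edges (pi[i := pi ! Suc i, Suc i := pi ! i]) w (length pi)"
  then obtain a b where ab: "b < a" "a < length pi" "w ! a" "e = {pi ! ?\<tau> a, pi ! ?\<tau> b}"
    unfolding build_edges_def using assms(2) by (auto simp: nth_list_update transpose_def)
  have "w ! max (?\<tau> a) (?\<tau> b) = w ! a"
    using ab(1) assms(3) by (auto simp: transpose_def max_def)
  moreover have "?\<tau> a < length pi" "?\<tau> b < length pi" "?\<tau> a \<noteq> ?\<tau> b"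
    using ab(1,2) assms(2) by (auto simp: transpose_def)
  ultimately show "e \<in> build_edges pi w (length pi)"
    using doubleton_in_build_edges_iff[of pi "?\<tau> a" "?\<tau> b" w] assms(1) ab by simp
qed

lemma T_swap:
  assumes "distinct pi" "Suc i < length pi" "w ! i = w ! Suc i"
  shows "T (pi[i := pi ! Suc i, Suc i := pi ! i]) w = T pi w"
proof -
  define pi' where "pi' = pi[i := pi ! Suc i, Suc i := pi ! i]"
  have "length pi' = length pi" "distinct pi'" "set pi' = set pi"
    using assms(1,2) unfolding pi'_def by simp_all
  moreover have "pi'[i := pi' ! Suc i, Suc i := pi' ! i] = pi"
    unfolding pi'_def using assms(2) by (intro nth_equalityI) (auto simp: nth_list_update)
  ultimately have "build_edges pi' w (length pi') = build_edges pi w (length pi)"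
    using build_edges_swap_subset[of pi' i w] build_edges_swap_subset[OF assms] assms(2,3)
    unfolding pi'_def by auto
  then show ?thesis
    using \<open>set pi' = set pi\<close> unfolding pi'_def by (simp add: T_eq)
qed

definition position_weight :: "nat list \<Rightarrow> nat" where
  "position_weight p = (\<Sum>l<length p. l * p ! l)"

lemma position_weight_swap_less:
  assumes "Suc i < length p" "p ! Suc i < p ! i"
  shows "position_weight p < position_weight (p[i := p ! Suc i, Suc i := p ! i])"
proof -
  let ?p' = "p[i := p ! Suc i, Suc i := p ! i]"
  have split: "(\<Sum>l<length p. l * q ! l) =
      (\<Sum>l\<in>{..<length p} - {i, Suc i}. l * q ! l) + (i * q ! i + Suc i * q ! Suc i)" for q
    using sum.subset_diff[of "{i, Suc i}" "{..<length p}" "\<lambda>l. l * q ! l"] assms(1) by simp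
  have "(\<Sum>l\<in>{..<length p} - {i, Suc i}. l * ?p' ! l) =
      (\<Sum>l\<in>{..<length p} - {i, Suc i}. l * p ! l)"
    by (rule sum.cong) (auto simp: nth_list_update)
  moreover have "i * p ! i + Suc i * p ! Suc i < i * ?p' ! i + Suc i * ?p' ! Suc i"
    using assms by (simp add: nth_list_update algebra_simps)
  ultimately show ?thesis
    unfolding position_weight_def by (simp only: split length_list_update)
qed

lemma standard_form_if_position_weight_maximal:
  assumes "distinct p" "v ! 0 = v ! 1"
    and maximal: "\<And>q. distinct q \<Longrightarrow> length q = length p \<Longrightarrow> T q v = T p v \<Longrightarrow>
      position_weight q \<le> position_weight p"
  shows "standard_form (length p) p v"
  unfolding standard_form_def
proof (intro conjI allI impI)
  show "v ! 0 = v ! 1"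
    by (fact assms(2))
next
  fix i
  assume i: "i + 1 < length p" and same_sign: "v ! i = v ! (i + 1)"
  show "p ! i < p ! (i + 1)"
  proof (rule ccontr)
    assume "\<not> p ! i < p ! (i + 1)"
    moreover have "p ! i \<noteq> p ! (i + 1)"
      using assms(1) i by (simp add: nth_eq_iff_index_eq)
    ultimately have descent: "p ! Suc i < p ! i"
      by simp
    let ?q = "p[i := p ! Suc i, Suc i := p ! i]"
    have "position_weight ?q \<le> position_weight p"
      using maximal[of ?q] assms(1) i same_sign T_swap[of p i v] by simp
    moreover have "position_weight p < position_weight ?q"
      using position_weight_swap_less[of i p] descent i by simp
    ultimately show False
      by simp
  qed
qed

lemma exists_standard_form:
  assumes "2 \<le> length pi" "distinct pi" "length w = length pi"
  shows "\<exists>pi' w'. distinct pi' \<and> length pi' = length pi \<and> length w' = length pi \<and>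
    standard_form (length pi) pi' w' \<and> T pi' w' = T pi w"
proof -
  define n where "n = length pi"
  define admissible where "admissible p v \<longleftrightarrow> distinct p \<and> length p = n \<and> length v = n \<and>
    v ! 0 = v ! 1 \<and> T p v = T pi w" for p v
  have "0 < length w"
    using assms(1,3) by linarith
  then have start: "admissible pi (w[0 := w ! 1])"
    unfolding admissible_def n_def using assms by (simp add: T_update_first_sign)
  have bounded: "position_weight p < Suc (n * n * Max (set pi))" if "admissible p v" for p v
  proof -
    have "set p = set pi" "length p = n"
      using that unfolding admissible_def by (metis T_eq fst_conv, simp)
    then have "l * p ! l \<le> n * Max (set pi)" if "l < n" for l
      using that by (intro mult_le_mono) (auto intro: Max_ge)
    then have "position_weight p \<le> n * (n * Max (set pi))"
      unfolding position_weight_def using sum_bounded_above[of "{..<n}" "\<lambda>l. l * p ! l"]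
        \<open>length p = n\<close> by simp
    then show ?thesis
      by simp
  qed
  have "\<exists>pv. case_prod admissible pv \<and> (\<forall>qu. case_prod admissible qu \<longrightarrow>
      (position_weight \<circ> fst) qu \<le> (position_weight \<circ> fst) pv)"
    by (rule ex_has_greatest_nat[of _ "(pi, w[0 := w ! 1])" _ "Suc (n * n * Max (set pi))"])
      (use start bounded in auto)
  then obtain p v where pv: "admissible p v"
    and greatest: "\<And>q u. admissible q u \<Longrightarrow> position_weight q \<le> position_weight p"
    by auto
  have "standard_form (length p) p v"
  proof (rule standard_form_if_position_weight_maximal)
    fix q
    assume "distinct q" "length q = length p" "T q v = T p v"
    then show "position_weight q \<le> position_weight p"
      using greatest[of q v] pv unfolding admissible_def by simp
  qed (use pv admissible_def in auto)
  then show ?thesis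
    using pv unfolding admissible_def n_def by auto
qed

lemma T_last_edge_iff:
  assumes "length pi = Suc k" "distinct pi" "T pi w = (V, E)" "z \<in> V - {pi ! k}"
  shows "{pi ! k, z} \<in> E \<longleftrightarrow> w ! k"
proof -
  obtain j where "j < Suc k" "z = pi ! j"
    using assms(1,3,4) by (auto simp: T_eq in_set_conv_nth)
  then have "j < k" "z = pi ! j"
    using assms(4) by (auto simp: less_Suc_eq)
  then show ?thesis
    using doubleton_in_build_edges_iff[of pi k j w] assms(1-3) by (simp add: T_eq)
qed

lemma T_take_last:
  assumes "length pi = Suc k" "distinct pi" "T pi w = (V, E)"
  shows "T (take k pi) (take k w) = (V - {pi ! k}, {e \<in> E. pi ! k \<notin> e})"
proof -
  have V: "V = set pi" and E: "E = build_edges pi w (Suc k)"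
    using assms by (simp_all add: T_eq)
  have split: "pi = take k pi @ [pi ! k]"
    using assms(1) by (metis lessI order_refl take_Suc_conv_app_nth take_all)
  then have "distinct (take k pi @ [pi ! k])"
    using assms(2) by simp
  then have "set (take k pi) = V - {pi ! k}"
    by (subst V, subst split) auto
  moreover have "pi ! k \<notin> e" if "e \<in> build_edges pi w k" for e
    using that assms(1,2) unfolding build_edges_def by (auto simp: nth_eq_iff_index_eq)
  then have "build_edges pi w k = {e \<in> E. pi ! k \<notin> e}"
    unfolding E build_edges_Suc by auto
  ultimately show ?thesis
    using assms(1) by (simp add: T_eq build_edges_take min_absorb2)
qed

lemma standard_form_increasing:
  assumes "standard_form m pi w" "j < l" "l < m" "\<And>i. j \<le> i \<Longrightarrow> i < l \<Longrightarrow> w ! i = w ! Suc i"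
  shows "pi ! j < pi ! l"
  using assms(2-4)
proof (induction l)
  case 0
  then show ?case by simp
next
  case (Suc l)
  have step: "pi ! l < pi ! Suc l"
    using assms(1) Suc.prems unfolding standard_form_def by simp
  show ?case
  proof (cases "j = l")
    case True
    then show ?thesis using step by simp
  next
    case False
    then have "pi ! j < pi ! l"
      using Suc by simp
    then show ?thesis using step by simp
  qed
qed

lemma standard_form_take:
  assumes "standard_form m pi w" "2 \<le> k" "k \<le> m"
  shows "standard_form k (take k pi) (take k w)"
  using assms unfolding standard_form_def by auto

lemma standard_form_last_greatest:
  assumes sf: "standard_form (Suc k) pi w" and len: "length pi = Suc k" and "distinct pi" "0 < k"
    and G: "T pi w = (V, E)" and y: "y \<in> V - {pi ! k}"
    and same_type: "\<forall>z \<in> V - {y}. {y, z} \<in> E \<longleftrightarrow> w ! k"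
  shows "y < pi ! k"
proof -
  have V: "V = set pi" and E: "E = build_edges pi w (length pi)"
    using G by (simp_all add: T_eq)
  obtain j where "j < Suc k" "y = pi ! j"
    using y V len by (auto simp: in_set_conv_nth)
  then have j: "j < k" "y = pi ! j"
    using y by (auto simp: less_Suc_eq)
  have sign: "w ! max j i = w ! k" if "i < Suc k" "i \<noteq> j" for i
  proof -
    have "pi ! i \<in> V - {y}"
      using that j len V \<open>distinct pi\<close> by (auto simp: nth_eq_iff_index_eq)
    then have "{y, pi ! i} \<in> E \<longleftrightarrow> w ! k"
      using same_type by blast
    moreover have "{pi ! j, pi ! i} \<in> E \<longleftrightarrow> w ! max j i"
      using doubleton_in_build_edges_iff[of pi j i w] that j len E \<open>distinct pi\<close> by simp
    ultimately show ?thesis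
      using j(2) by simp
  qed
  have "w ! j = w ! k"
  proof (cases "j = 0")
    case True
    then show ?thesis
      using sf sign[of 1] \<open>0 < k\<close> unfolding standard_form_def by auto
  next
    case False
    then show ?thesis
      using sign[of 0] j by simp
  qed
  then have "w ! i = w ! Suc i" if "j \<le> i" "i < k" for i
    using sign[of i] sign[of "Suc i"] that by (cases "i = j") auto
  then show ?thesis
    using standard_form_increasing[OF sf j(1)] j by simp
qed

lemma eq_if_take_nth_eq:
  assumes "length xs = Suc k" "length ys = Suc k" "take k xs = take k ys" "xs ! k = ys ! k"
  shows "xs = ys"
  using assms by (metis lessI order_refl take_Suc_conv_app_nth take_all)

lemma standard_form_last_eq:
  assumes "0 < k" "length pi = Suc k" "length pi' = Suc k" "distinct pi" "distinct pi'"
    "standard_form (Suc k) pi w" "standard_form (Suc k) pi' w'"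
    and G: "T pi w = (V, E)" and G': "T pi' w' = (V, E)"
  shows "pi ! k = pi' ! k \<and> w ! k = w' ! k"
proof -
  have last: "{pi ! k, z} \<in> E \<longleftrightarrow> w ! k" if "z \<in> V - {pi ! k}" for z
    using T_last_edge_iff[OF _ _ G that] assms(2,4) by simp
  have last': "{pi' ! k, z} \<in> E \<longleftrightarrow> w' ! k" if "z \<in> V - {pi' ! k}" for z
    using T_last_edge_iff[OF _ _ G' that] assms(3,5) by simp
  have V: "set pi = V" "set pi' = V"
    using G G' by (simp_all add: T_eq)
  have in_V: "pi ! k \<in> V"
    using nth_mem[of k pi] assms(2) V(1) by simp
  have in_V': "pi' ! k \<in> V"
    using nth_mem[of k pi'] assms(3) V(2) by simp
  have sign_eq: "w ! k = w' ! k"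
  proof (cases "pi ! k = pi' ! k")
    case True
    have "pi ! 0 \<in> V - {pi ! k}"
      using V(1) assms(1,2,4) by (auto simp: nth_eq_iff_index_eq)
    then show ?thesis
      using last last' True by metis
  next
    case False
    then show ?thesis
      using last[of "pi' ! k"] last'[of "pi ! k"] in_V in_V' by (simp add: insert_commute)
  qed
  have "pi ! k = pi' ! k"
  proof (rule ccontr)
    assume ne: "pi ! k \<noteq> pi' ! k"
    have "pi' ! k < pi ! k"
      using standard_form_last_greatest[OF assms(6,2,4,1) G] in_V' ne last' sign_eq
      by (simp add: insert_commute)
    moreover have "pi ! k < pi' ! k"
      using standard_form_last_greatest[OF assms(7,3,5,1) G'] in_V ne last sign_eq
      by (simp add: insert_commute)
    ultimately show False
      by simp
  qed
  with sign_eq show ?thesis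
    by simp
qed

lemma standard_form_unique:
  assumes "2 \<le> m" "length pi = m" "length pi' = m" "length w = m" "length w' = m"
    "distinct pi" "distinct pi'" "standard_form m pi w" "standard_form m pi' w'"
    "T pi w = T pi' w'"
  shows "pi = pi' \<and> w = w'"
  using assms
proof (induction m arbitrary: pi pi' w w')
  case 0
  then show ?case by simp
next
  case (Suc k)
  obtain V E where G: "T pi w = (V, E)" and G': "T pi' w' = (V, E)"
    using Suc.prems(10) by (metis prod.exhaust)
  have "0 < k"
    using Suc.prems(1) by simp
  have last_eq: "pi ! k = pi' ! k" and sign_eq: "w ! k = w' ! k"
    using standard_form_last_eq[OF \<open>0 < k\<close> Suc.prems(2,3,6-9) G G'] by simp_all
  have T_prefix: "T (take k pi) (take k w) = T (take k pi') (take k w')"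
    using T_take_last[OF _ _ G] T_take_last[OF _ _ G'] Suc.prems(2,3,6,7) last_eq by simp
  have prefix: "take k pi = take k pi' \<and> take k w = take k w'"
  proof (cases "k = 1")
    case True
    \<comment> \<open>standard form is meaningless for one vertex, so the induction stops at two\<close>
    have "set (take 1 pi) = set (take 1 pi')"
      using T_prefix True by (simp add: T_eq)
    then have "pi ! 0 = pi' ! 0"
      using Suc.prems(2,3) True by (simp add: take_Suc_conv_app_nth)
    moreover have "w ! 0 = w' ! 0"
      using Suc.prems(8,9) sign_eq True unfolding standard_form_def by simp
    ultimately show ?thesis
      using Suc.prems(2-5) True by (simp add: take_Suc_conv_app_nth)
  next
    case False
    then show ?thesis
      using Suc.IH[of "take k pi" "take k pi'" "take k w" "take k w'"] Suc.prems(2-9) T_prefix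
        standard_form_take[of "Suc k" pi w k] standard_form_take[of "Suc k" pi' w' k] \<open>0 < k\<close>
      by simp
  qed
  show ?case
    using eq_if_take_nth_eq[of pi k pi'] eq_if_take_nth_eq[of w k w'] prefix last_eq sign_eq
      Suc.prems(2-5) by simp
qed

theorem lemma2:
  fixes n :: nat and E :: "nat set set"
  assumes "n \<ge> 2"
    and "threshold_graph ({1..n}, E)"
  shows "\<exists>!(pi, w). threshold_pair n pi w \<and> standard_form n pi w \<and> T pi w = ({1..n}, E)"
proof (rule ex_ex1I)
  obtain pi0 w0 where pi0: "distinct pi0" "set pi0 = {1..n}" "length w0 = length pi0"
    and G: "T pi0 w0 = ({1..n}, E)"
    using threshold_graph_imp_T[OF assms(2)] by auto
  then have "length pi0 = n"
    using distinct_card by fastforce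
  then obtain pi w where "distinct pi" "length pi = n" "length w = n" "standard_form n pi w"
      "T pi w = ({1..n}, E)"
    using exists_standard_form[OF _ pi0(1,3)] assms(1) G by auto
  moreover have "set pi = {1..n}"
    using \<open>T pi w = ({1..n}, E)\<close> by (simp add: T_eq)
  ultimately show "\<exists>x. case x of (pi, w) \<Rightarrow>
      threshold_pair n pi w \<and> standard_form n pi w \<and> T pi w = ({1..n}, E)"
    unfolding threshold_pair_def is_perm_def by auto
next
  fix x y
  assume "case x of (pi, w) \<Rightarrow> threshold_pair n pi w \<and> standard_form n pi w \<and> T pi w = ({1..n}, E)"
    and "case y of (pi, w) \<Rightarrow> threshold_pair n pi w \<and> standard_form n pi w \<and> T pi w = ({1..n}, E)"
  then show "x = y"
    using standard_form_unique[OF assms(1)] unfolding threshold_pair_def is_perm_def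
    by (cases x, cases y) auto
qed

end
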